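(* Assume (A1). Let $g:\mathcal X\to\mathbb R$ and let $u$ be the solution of problem (P) with boundary data $g|_\Gamma$. For $x\in\mathcal X$ let $(X_i)_{i\ge0}$ be the stochastic process started at $X_0=x$ defined as follows: given $X_i$, if $X_i\in\Gamma$ set $X_{i+1}=X_i$; otherwise, independently of everything else, with probability $\alpha$ take $X_{i+1}=y$ with probability $w_{X_iy}/d_{X_i}$, with probability $\frac12(1-\alpha)$ take $X_{i+1}\in\operatorname{argmax}_{y\in N_{X_i}}u(y)$, and with probability $\frac12(1-\alpha)$ take $X_{i+1}\in\operatorname{argmin}_{y\in N_{X_i}\cap\Gamma}g(y)$. Let $\tau=\inf\{i\ge0: X_i\in\Gamma\}$. Then $$u(x)-g(x)\le\mathbb E\big[g(X_\tau)-g(x)\mid X_0=x\big].$$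
   Context: $\mathcal X$ is a finite vertex set and $W=(w_{xy})$ a symmetric matrix of nonnegative weights defining a connected graph, with degrees $d_x=\sum_{y}w_{xy}$ and neighbor sets $N_x=\{y\in\mathcal X:w_{xy}>0\}$. For $p\ge2$, $\alpha=1/(p-1)$, and $$\mathcal L_p u(x)=\alpha\,\frac{1}{d_x}\sum_{y}w_{xy}\big(u(x)-u(y)\big)+(1-\alpha)\Big(u(x)-\tfrac12\big(\max_{N_x}u+\min_{N_x}u\big)\Big).$$ $\Gamma\subset\mathcal X$ is the set of labeled vertices. Problem (P): find $u:\mathcal X\to\mathbb R$ with $\mathcal L_pu(x)=0$ for $x\in\mathcal X\setminus\Gamma$ and $u=g$ on $\Gamma$; since the graph is connected it has a unique solution. Assumption (A1): $\Gamma\cap N_x\neq\varnothing$ for every $x\in\mathcal X$. *)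

theory Defs
  imports "HOL-Probability.Probability"
begin

definition deg :: "('a::finite \<Rightarrow> 'a \<Rightarrow> real) \<Rightarrow> 'a \<Rightarrow> real" where
  "deg w x = (\<Sum>y\<in>UNIV. w x y)"

definition nbrs :: "('a \<Rightarrow> 'a \<Rightarrow> real) \<Rightarrow> 'a \<Rightarrow> 'a set" where
  "nbrs w x = {y. w x y > 0}"

definition weighted_graph :: "('a::finite \<Rightarrow> 'a \<Rightarrow> real) \<Rightarrow> bool" where
  "weighted_graph w \<longleftrightarrow> (\<forall>x y. w x y = w y x) \<and> (\<forall>x y. 0 \<le> w x y)"

definition connected_graph :: "('a::finite \<Rightarrow> 'a \<Rightarrow> real) \<Rightarrow> bool" where
  "connected_graph w \<longleftrightarrow> (\<forall>x y. (x, y) \<in> {(a, b). w a b > 0}\<^sup>*)"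

text \<open>The operator L_p with alpha = 1/(p-1).\<close>
definition Lp :: "real \<Rightarrow> ('a::finite \<Rightarrow> 'a \<Rightarrow> real) \<Rightarrow> ('a \<Rightarrow> real) \<Rightarrow> 'a \<Rightarrow> real" where
  "Lp p w u x =
     (1 / (p - 1)) * ((1 / deg w x) * (\<Sum>y\<in>UNIV. w x y * (u x - u y)))
     + (1 - 1 / (p - 1)) *
       (u x - (1/2) * (Max (u ` nbrs w x) + Min (u ` nbrs w x)))"

definition solves_P :: "real \<Rightarrow> ('a::finite \<Rightarrow> 'a \<Rightarrow> real) \<Rightarrow> 'a set \<Rightarrow> ('a \<Rightarrow> real) \<Rightarrow> ('a \<Rightarrow> real) \<Rightarrow> bool" where
  "solves_P p w \<Gamma> g u \<longleftrightarrow> (\<forall>x. x \<notin> \<Gamma> \<longrightarrow> Lp p w u x = 0) \<and> (\<forall>x\<in>\<Gamma>. u x = g x)"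

definition A1 :: "('a \<Rightarrow> 'a \<Rightarrow> real) \<Rightarrow> 'a set \<Rightarrow> bool" where
  "A1 w \<Gamma> \<longleftrightarrow> (\<forall>x. \<Gamma> \<inter> nbrs w x \<noteq> {})"

definition walk_pmf :: "('a::finite \<Rightarrow> 'a \<Rightarrow> real) \<Rightarrow> 'a \<Rightarrow> 'a pmf" where
  "walk_pmf w x = embed_pmf (\<lambda>y. w x y / deg w x)"

text \<open>One-step transition law from state x, given selectors smax (a point of
  argmax of u over N_x) and smin (a point of argmin of g over N_x \<inter> Gamma).\<close>
definition step_pmf :: "real \<Rightarrow> ('a::finite \<Rightarrow> 'a \<Rightarrow> real) \<Rightarrow> 'a set \<Rightarrow> ('a \<Rightarrow> 'a) \<Rightarrow> ('a \<Rightarrow> 'a) \<Rightarrow> 'a \<Rightarrow> 'a pmf" where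
  "step_pmf p w \<Gamma> smax smin x =
     (if x \<in> \<Gamma> then return_pmf x
      else bind_pmf (bernoulli_pmf (1 / (p - 1))) (\<lambda>b.
        if b then walk_pmf w x
        else bind_pmf (bernoulli_pmf (1/2)) (\<lambda>c. if c then return_pmf (smax x) else return_pmf (smin x))))"

text \<open>Random mapping representation: at each step an independent random map
  F : 'a \<Rightarrow> 'a is drawn, with F z ~ step_pmf z independently over z; X_{i+1} = F_i (X_i).\<close>
definition innov_space :: "real \<Rightarrow> ('a::finite \<Rightarrow> 'a \<Rightarrow> real) \<Rightarrow> 'a set \<Rightarrow> ('a \<Rightarrow> 'a) \<Rightarrow> ('a \<Rightarrow> 'a) \<Rightarrow> ('a \<Rightarrow> 'a) stream measure" where
  "innov_space p w \<Gamma> smax smin =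
     stream_space (measure_pmf (Pi_pmf UNIV undefined (step_pmf p w \<Gamma> smax smin)))"

primrec proc :: "'a \<Rightarrow> ('a \<Rightarrow> 'a) stream \<Rightarrow> nat \<Rightarrow> 'a" where
  "proc x \<omega> 0 = x"
| "proc x \<omega> (Suc i) = (\<omega> !! i) (proc x \<omega> i)"

definition hit_time :: "'a set \<Rightarrow> 'a \<Rightarrow> ('a \<Rightarrow> 'a) stream \<Rightarrow> nat" where
  "hit_time \<Gamma> x \<omega> = (LEAST i. proc x \<omega> i \<in> \<Gamma>)"

end

theory Submission
  imports Defs
begin

text \<open>Written as a mean-value identity, \<open>Lp u = 0\<close> says that off \<open>\<Gamma>\<close> the value \<open>u z\<close> is the
  expectation of \<open>u\<close> after one step, except that the min-player's term \<open>min\<^bsub>N\<^sub>z\<^esub> u\<close> is replaced by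
  \<open>u (smin z)\<close>, which can only be larger. So \<open>u\<close> is subharmonic for the step kernel and
  \<open>u x \<le> E u(X\<^bsub>min n \<tau>\<^esub>)\<close> for every \<open>n\<close>. By (A1) each step from outside \<open>\<Gamma>\<close> enters \<open>\<Gamma>\<close> with
  probability at least some \<open>c > 0\<close>, so \<open>P(\<tau> > n) \<le> (1 - c)\<^sup>n\<close>; as \<open>u = g\<close> on \<open>\<Gamma>\<close>, letting
  \<open>n \<rightarrow> \<infinity>\<close> gives \<open>u x \<le> E g(X\<^sub>\<tau>)\<close>.\<close>

lemma (in prob_space) integral_stream_space:
  fixes f :: "'a stream \<Rightarrow> real"
  assumes [measurable]: "f \<in> borel_measurable (stream_space M)" and bnd: "\<And>\<omega>. \<bar>f \<omega>\<bar> \<le> B"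
  shows "(\<integral>X. f X \<partial>stream_space M) = (\<integral>x. (\<integral>X. f (x ## X) \<partial>stream_space M) \<partial>M)"
proof -
  interpret S: sequence_space M ..
  interpret P: pair_prob_space M "\<Pi>\<^sub>M i::nat\<in>UNIV. M" ..
  have int: "integrable (M \<Otimes>\<^sub>M S.S) (\<lambda>X. f (to_stream ((\<lambda>(s, \<omega>). case_nat s \<omega>) X)))"
    by (rule P.P.integrable_const_bound[where B=B]) (auto simp: bnd)
  have "(\<integral>X. f X \<partial>stream_space M) = (\<integral>X. f (to_stream X) \<partial>S.S)"
    by (subst stream_space_eq_distr) (simp add: integral_distr)
  also have "\<dots> = (\<integral>X. f (to_stream ((\<lambda>(s, \<omega>). case_nat s \<omega>) X)) \<partial>(M \<Otimes>\<^sub>M S.S))"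
    by (subst S.PiM_iter[symmetric]) (simp add: integral_distr)
  also have "\<dots> = (\<integral>x. \<integral>X. f (to_stream ((\<lambda>(s, \<omega>). case_nat s \<omega>) (x, X))) \<partial>S.S \<partial>M)"
    using P.integral_fst'[OF int] by simp
  also have "\<dots> = (\<integral>x. \<integral>X. f (x ## to_stream X) \<partial>S.S \<partial>M)"
    by (auto intro!: Bochner_Integration.integral_cong simp: to_stream_nat_case)
  also have "\<dots> = (\<integral>x. \<integral>X. f (x ## X) \<partial>stream_space M \<partial>M)"
    by (subst stream_space_eq_distr) (simp add: integral_distr cong: Bochner_Integration.integral_cong)
  finally show ?thesis .
qed

lemma (in finite_measure) integrable_finite_valued:
  fixes h :: "'b::finite \<Rightarrow> real"
  assumes "X \<in> measurable M (count_space UNIV)"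
  shows "integrable M (\<lambda>\<omega>. h (X \<omega>))"
proof (rule integrable_const_bound[where B="\<Sum>y\<in>UNIV. \<bar>h y\<bar>"])
  show "AE \<omega> in M. norm (h (X \<omega>)) \<le> (\<Sum>y\<in>UNIV. \<bar>h y\<bar>)"
    by (intro AE_I2) (auto intro: member_le_sum)
  show "(\<lambda>\<omega>. h (X \<omega>)) \<in> borel_measurable M"
    using assms by (rule measurable_compose) simp
qed

lemma integral_bind_pmf_finite:
  fixes f :: "'b::finite \<Rightarrow> real"
  shows "(\<integral>y. f y \<partial>bind_pmf M N) = (\<integral>x. (\<integral>y. f y \<partial>N x) \<partial>M)"
proof -
  have "(\<integral>y. f y \<partial>bind_pmf M N) = (\<Sum>y\<in>UNIV. pmf (bind_pmf M N) y * f y)"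
    by (subst integral_measure_pmf[of UNIV]) auto
  also have "\<dots> = (\<Sum>y\<in>UNIV. (\<integral>x. pmf (N x) y * f y \<partial>M))"
    by (simp add: pmf_bind)
  also have "\<dots> = (\<integral>x. (\<Sum>y\<in>UNIV. pmf (N x) y * f y) \<partial>M)"
  proof (rule Bochner_Integration.integral_sum[symmetric])
    fix y
    have "integrable M (\<lambda>x. pmf (N x) y)"
      by (rule measure_pmf.integrable_const_bound[where B=1]) (auto simp: pmf_le_1)
    then show "integrable M (\<lambda>x. pmf (N x) y * f y)" by (rule integrable_mult_left)
  qed
  also have "\<dots> = (\<integral>x. (\<integral>y. f y \<partial>N x) \<partial>M)"
    by (subst integral_measure_pmf[of UNIV]) auto
  finally show ?thesis .
qed

subsection \<open>Iterated independent random maps\<close>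

definition random_maps :: "('a::finite \<Rightarrow> 'a pmf) \<Rightarrow> ('a \<Rightarrow> 'a) stream measure" where
  "random_maps st = stream_space (measure_pmf (Pi_pmf UNIV undefined st))"

lemma prob_space_random_maps: "prob_space (random_maps st)"
  unfolding random_maps_def by (rule prob_space.prob_space_stream_space[OF prob_space_measure_pmf])

lemma measurable_proc:
  "(\<lambda>\<omega>. proc z \<omega> i) \<in> measurable (random_maps st) (count_space (UNIV::'a::finite set))"
  unfolding random_maps_def
proof (induction i)
  case (Suc i)
  have "(\<lambda>\<omega>. (\<omega> !! i) (proc z \<omega> i))
      \<in> measurable (stream_space (measure_pmf (Pi_pmf UNIV undefined st))) (count_space UNIV)"
  proof (rule measurable_compose_countable'[where g="\<lambda>\<omega>. proc z \<omega> i" and f="\<lambda>j \<omega>. (\<omega> !! i) j"])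
    show "(\<lambda>\<omega>. (\<omega> !! i) j) \<in> measurable (stream_space (measure_pmf (Pi_pmf UNIV undefined st))) (count_space UNIV)" for j
      by (rule measurable_compose[OF measurable_snth]) simp
  qed (use Suc in \<open>auto intro: countable_finite\<close>)
  then show ?case by simp
qed simp

lemma measurable_proc_hit_time:
  "(\<lambda>\<omega>. proc z \<omega> (hit_time \<Gamma> z \<omega>))
     \<in> measurable (random_maps st) (count_space (UNIV::'a::finite set))"
proof (rule measurable_compose_countable'[where g="hit_time \<Gamma> z" and f="\<lambda>j \<omega>. proc z \<omega> j"])
  show "hit_time \<Gamma> z \<in> measurable (random_maps st) (count_space UNIV)"
    unfolding hit_time_def
    by (rule measurable_Least, rule measurable_compose[OF measurable_proc]) simp
qed (auto intro: measurable_proc)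

lemma integral_random_maps_first_step:
  fixes h :: "'a::finite \<Rightarrow> ('a \<Rightarrow> 'a) stream \<Rightarrow> real"
  assumes meas: "\<And>y. h y \<in> borel_measurable (random_maps st)" and bnd: "\<And>y \<omega>. \<bar>h y \<omega>\<bar> \<le> B"
  shows "(\<integral>\<omega>. h (shd \<omega> z) (stl \<omega>) \<partial>random_maps st) = (\<integral>y. (\<integral>\<omega>. h y \<omega> \<partial>random_maps st) \<partial>st z)"
proof -
  define D where "D = Pi_pmf UNIV undefined st"
  have S: "random_maps st = stream_space (measure_pmf D)"
    by (simp add: random_maps_def D_def)
  have "(\<lambda>\<omega>. h (shd \<omega> z) (stl \<omega>)) \<in> borel_measurable (random_maps st)"
  proof (rule measurable_compose_countable'[where g="\<lambda>\<omega>. shd \<omega> z" and f="\<lambda>y \<omega>. h y (stl \<omega>)"])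
    show "(\<lambda>\<omega>. shd \<omega> z) \<in> measurable (random_maps st) (count_space UNIV)"
      unfolding S by (rule measurable_compose[OF measurable_shd]) simp
    show "(\<lambda>\<omega>. h y (stl \<omega>)) \<in> borel_measurable (random_maps st)" for y
      unfolding S by (rule measurable_compose[OF measurable_stl meas[unfolded S]])
  qed (auto intro: countable_finite)
  then have "(\<integral>\<omega>. h (shd \<omega> z) (stl \<omega>) \<partial>random_maps st) = (\<integral>F. (\<integral>\<omega>. h (F z) \<omega> \<partial>random_maps st) \<partial>D)"
    unfolding S using prob_space.integral_stream_space[OF prob_space_measure_pmf, of "\<lambda>\<omega>. h (shd \<omega> z) (stl \<omega>)" D B]
    by (simp add: bnd)
  also have "\<dots> = (\<integral>y. (\<integral>\<omega>. h y \<omega> \<partial>random_maps st) \<partial>map_pmf (\<lambda>F. F z) D)"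
    by simp
  also have "map_pmf (\<lambda>F. F z) D = st z"
    by (simp add: D_def Pi_pmf_component)
  finally show ?thesis .
qed

subsection \<open>The process stopped on hitting a set\<close>

text \<open>\<open>stopped_proc \<Gamma> z \<omega> n\<close> is \<open>proc z \<omega> (min n (hit_time \<Gamma> z \<omega>))\<close>, unfolded from the
  first step so that it recurses on the tail of the stream.\<close>

fun stopped_proc :: "'a set \<Rightarrow> 'a \<Rightarrow> ('a \<Rightarrow> 'a) stream \<Rightarrow> nat \<Rightarrow> 'a" where
  "stopped_proc \<Gamma> z \<omega> 0 = z"
| "stopped_proc \<Gamma> z \<omega> (Suc n) = (if z \<in> \<Gamma> then z else stopped_proc \<Gamma> (shd \<omega> z) (stl \<omega>) n)"

lemma proc_Suc_shift: "proc z \<omega> (Suc i) = proc (shd \<omega> z) (stl \<omega>) i"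
  by (induction i) auto

lemma stopped_proc_in: "z \<in> \<Gamma> \<Longrightarrow> stopped_proc \<Gamma> z \<omega> n = z"
  by (cases n) auto

lemma hit_time_eq_0: "z \<in> \<Gamma> \<Longrightarrow> hit_time \<Gamma> z \<omega> = 0"
  unfolding hit_time_def by (rule Least_eq_0) simp

lemma hit_time_Suc:
  assumes "z \<notin> \<Gamma>" and "proc (shd \<omega> z) (stl \<omega>) k \<in> \<Gamma>"
  shows "hit_time \<Gamma> z \<omega> = Suc (hit_time \<Gamma> (shd \<omega> z) (stl \<omega>))"
proof -
  have "hit_time \<Gamma> z \<omega> = Suc (LEAST i. proc z \<omega> (Suc i) \<in> \<Gamma>)"
    unfolding hit_time_def using assms
    by (intro Least_Suc[where P="\<lambda>i. proc z \<omega> i \<in> \<Gamma>" and n="Suc k"]) (simp_all add: proc_Suc_shift del: proc.simps(2))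
  then show ?thesis
    by (simp add: hit_time_def proc_Suc_shift del: proc.simps)
qed

lemma stopped_proc_hit:
  "stopped_proc \<Gamma> z \<omega> n \<in> \<Gamma> \<Longrightarrow> stopped_proc \<Gamma> z \<omega> n = proc z \<omega> (hit_time \<Gamma> z \<omega>)"
proof (induction n arbitrary: z \<omega>)
  case (Suc n)
  show ?case
  proof (cases "z \<in> \<Gamma>")
    case False
    with Suc.prems have "stopped_proc \<Gamma> (shd \<omega> z) (stl \<omega>) n \<in> \<Gamma>" by simp
    with Suc.IH have "stopped_proc \<Gamma> (shd \<omega> z) (stl \<omega>) n
        = proc (shd \<omega> z) (stl \<omega>) (hit_time \<Gamma> (shd \<omega> z) (stl \<omega>))"
      by blast
    with False \<open>stopped_proc \<Gamma> (shd \<omega> z) (stl \<omega>) n \<in> \<Gamma>\<close> show ?thesis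
      by (simp add: hit_time_Suc proc_Suc_shift del: proc.simps)
  qed (simp add: hit_time_eq_0)
qed (simp add: hit_time_eq_0)

lemma measurable_stopped_proc:
  "(\<lambda>\<omega>. stopped_proc \<Gamma> z \<omega> n) \<in> measurable (random_maps st) (count_space (UNIV::'a::finite set))"
  unfolding random_maps_def
proof (induction n arbitrary: z)
  case (Suc n)
  let ?S = "stream_space (measure_pmf (Pi_pmf UNIV undefined st))"
  have "(\<lambda>\<omega>. stopped_proc \<Gamma> (shd \<omega> z) (stl \<omega>) n) \<in> measurable ?S (count_space UNIV)"
  proof (rule measurable_compose_countable'[where g="\<lambda>\<omega>. shd \<omega> z" and f="\<lambda>y \<omega>. stopped_proc \<Gamma> y (stl \<omega>) n"])
    show "(\<lambda>\<omega>. stopped_proc \<Gamma> y (stl \<omega>) n) \<in> measurable ?S (count_space UNIV)" for y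
      by (rule measurable_compose[OF measurable_stl Suc.IH])
    show "(\<lambda>\<omega>. shd \<omega> z) \<in> measurable ?S (count_space UNIV)"
      by (rule measurable_compose[OF measurable_shd]) simp
  qed (auto intro: countable_finite)
  then show ?case by (cases "z \<in> \<Gamma>") auto
qed simp

lemma integral_stopped_proc_Suc:
  fixes h :: "'a::finite \<Rightarrow> real"
  assumes "z \<notin> \<Gamma>"
  shows "(\<integral>\<omega>. h (stopped_proc \<Gamma> z \<omega> (Suc n)) \<partial>random_maps st)
       = (\<integral>y. (\<integral>\<omega>. h (stopped_proc \<Gamma> y \<omega> n) \<partial>random_maps st) \<partial>st z)"
proof -
  have "(\<integral>\<omega>. h (stopped_proc \<Gamma> z \<omega> (Suc n)) \<partial>random_maps st)
      = (\<integral>\<omega>. h (stopped_proc \<Gamma> (shd \<omega> z) (stl \<omega>) n) \<partial>random_maps st)"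
    using assms by simp
  also have "\<dots> = (\<integral>y. (\<integral>\<omega>. h (stopped_proc \<Gamma> y \<omega> n) \<partial>random_maps st) \<partial>st z)"
  proof (rule integral_random_maps_first_step)
    show "(\<lambda>\<omega>. h (stopped_proc \<Gamma> y \<omega> n)) \<in> borel_measurable (random_maps st)" for y
      by (rule measurable_compose[OF measurable_stopped_proc]) simp
    show "\<bar>h (stopped_proc \<Gamma> y \<omega> n)\<bar> \<le> (\<Sum>y\<in>UNIV. \<bar>h y\<bar>)" for y \<omega>
      by (auto intro: member_le_sum)
  qed
  finally show ?thesis .
qed

lemma subharmonic_le_integral_stopped_proc:
  fixes st :: "'a::finite \<Rightarrow> 'a pmf" and u :: "'a \<Rightarrow> real"
  assumes sub: "\<And>z. z \<notin> \<Gamma> \<Longrightarrow> u z \<le> (\<integral>y. u y \<partial>st z)"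
  shows "u z \<le> (\<integral>\<omega>. u (stopped_proc \<Gamma> z \<omega> n) \<partial>random_maps st)"
proof (induction n arbitrary: z)
  case 0
  show ?case by (simp add: prob_space.prob_space[OF prob_space_random_maps])
next
  case (Suc n)
  show ?case
  proof (cases "z \<in> \<Gamma>")
    case True
    then show ?thesis by (simp add: prob_space.prob_space[OF prob_space_random_maps])
  next
    case False
    have "u z \<le> (\<integral>y. u y \<partial>st z)" by (rule sub[OF False])
    also have "\<dots> \<le> (\<integral>y. (\<integral>\<omega>. u (stopped_proc \<Gamma> y \<omega> n) \<partial>random_maps st) \<partial>st z)"
      by (rule integral_mono) (auto intro: integrable_measure_pmf_finite Suc.IH)
    also have "\<dots> = (\<integral>\<omega>. u (stopped_proc \<Gamma> z \<omega> (Suc n)) \<partial>random_maps st)"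
      using False by (rule integral_stopped_proc_Suc[symmetric])
    finally show ?thesis .
  qed
qed

lemma integral_not_yet_stopped_le:
  fixes st :: "'a::finite \<Rightarrow> 'a pmf"
  assumes hit: "\<And>z. z \<notin> \<Gamma> \<Longrightarrow> c \<le> measure_pmf.prob (st z) \<Gamma>" and "c \<le> 1"
  shows "(\<integral>\<omega>. indicat_real (-\<Gamma>) (stopped_proc \<Gamma> z \<omega> n) \<partial>random_maps st) \<le> (1 - c) ^ n"
proof (induction n arbitrary: z)
  case 0
  show ?case by (simp add: prob_space.prob_space[OF prob_space_random_maps] indicator_def)
next
  case (Suc n)
  define Q where "Q y = (\<integral>\<omega>. indicat_real (-\<Gamma>) (stopped_proc \<Gamma> y \<omega> n) \<partial>random_maps st)" for y
  have Q_le: "Q y \<le> (1 - c) ^ n * indicat_real (-\<Gamma>) y" for y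
    using Suc.IH[of y] by (cases "y \<in> \<Gamma>") (simp_all add: Q_def stopped_proc_in)
  show ?case
  proof (cases "z \<in> \<Gamma>")
    case True
    then show ?thesis using \<open>c \<le> 1\<close> by simp
  next
    case False
    have "(\<integral>\<omega>. indicat_real (-\<Gamma>) (stopped_proc \<Gamma> z \<omega> (Suc n)) \<partial>random_maps st) = (\<integral>y. Q y \<partial>st z)"
      unfolding Q_def using False by (rule integral_stopped_proc_Suc)
    also have "\<dots> \<le> (\<integral>y. (1 - c) ^ n * indicat_real (-\<Gamma>) y \<partial>st z)"
      by (rule integral_mono) (auto intro: integrable_measure_pmf_finite Q_le)
    also have "\<dots> = (1 - c) ^ n * (1 - measure_pmf.prob (st z) \<Gamma>)"
      using measure_pmf.prob_compl[of \<Gamma> "st z"] by (simp add: Compl_eq_Diff_UNIV)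
    also have "\<dots> \<le> (1 - c) ^ n * (1 - c)"
      using hit[OF False] \<open>c \<le> 1\<close> by (intro mult_left_mono) auto
    finally show ?thesis by (simp add: mult.commute)
  qed
qed

lemma integral_stopped_proc_le_integral_hit:
  fixes u g :: "'a::finite \<Rightarrow> real"
  assumes bdry: "\<And>z. z \<in> \<Gamma> \<Longrightarrow> u z = g z" and u_bnd: "\<And>y. \<bar>u y\<bar> \<le> B" and g_bnd: "\<And>y. \<bar>g y\<bar> \<le> B"
  shows "(\<integral>\<omega>. u (stopped_proc \<Gamma> x \<omega> n) \<partial>random_maps st)
     \<le> (\<integral>\<omega>. g (proc x \<omega> (hit_time \<Gamma> x \<omega>)) \<partial>random_maps st)
       + 2 * B * (\<integral>\<omega>. indicat_real (-\<Gamma>) (stopped_proc \<Gamma> x \<omega> n) \<partial>random_maps st)"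
proof -
  interpret prob_space "random_maps st" by (rule prob_space_random_maps)
  let ?Y = "\<lambda>\<omega>. stopped_proc \<Gamma> x \<omega> n" and ?G = "\<lambda>\<omega>. g (proc x \<omega> (hit_time \<Gamma> x \<omega>))"
  have int_Y: "integrable (random_maps st) (\<lambda>\<omega>. h (?Y \<omega>))" for h :: "'a \<Rightarrow> real"
    by (rule integrable_finite_valued[OF measurable_stopped_proc])
  have int_G: "integrable (random_maps st) ?G"
    by (rule integrable_finite_valued[OF measurable_proc_hit_time])
  have "u (?Y \<omega>) \<le> ?G \<omega> + 2 * B * indicat_real (-\<Gamma>) (?Y \<omega>)" for \<omega>
  proof (cases "?Y \<omega> \<in> \<Gamma>")
    case True
    then show ?thesis using bdry stopped_proc_hit[OF True] by simp
  next
    case False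
    then show ?thesis using u_bnd[of "?Y \<omega>"] g_bnd[of "proc x \<omega> (hit_time \<Gamma> x \<omega>)"] by simp
  qed
  then have "(\<integral>\<omega>. u (?Y \<omega>) \<partial>random_maps st) \<le> (\<integral>\<omega>. ?G \<omega> + 2 * B * indicat_real (-\<Gamma>) (?Y \<omega>) \<partial>random_maps st)"
    by (intro integral_mono int_Y int_G Bochner_Integration.integrable_add integrable_mult_right)
  also have "\<dots> = (\<integral>\<omega>. ?G \<omega> \<partial>random_maps st) + 2 * B * (\<integral>\<omega>. indicat_real (-\<Gamma>) (?Y \<omega>) \<partial>random_maps st)"
    using int_G int_Y by simp
  finally show ?thesis .
qed

theorem subharmonic_le_integral_hit:
  fixes st :: "'a::finite \<Rightarrow> 'a pmf" and u g :: "'a \<Rightarrow> real"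
  assumes sub: "\<And>z. z \<notin> \<Gamma> \<Longrightarrow> u z \<le> (\<integral>y. u y \<partial>st z)"
    and hit: "\<And>z. z \<notin> \<Gamma> \<Longrightarrow> 0 < measure_pmf.prob (st z) \<Gamma>"
    and bdry: "\<And>z. z \<in> \<Gamma> \<Longrightarrow> u z = g z"
  shows "u x \<le> (\<integral>\<omega>. g (proc x \<omega> (hit_time \<Gamma> x \<omega>)) \<partial>random_maps st)"
proof -
  define c where "c = Min (insert 1 ((\<lambda>z. measure_pmf.prob (st z) \<Gamma>) ` (-\<Gamma>)))"
  have "0 < c" unfolding c_def using hit by (subst Min_gr_iff) auto
  have "c \<le> 1" unfolding c_def by (rule Min_le) auto
  have c_le: "c \<le> measure_pmf.prob (st z) \<Gamma>" if "z \<notin> \<Gamma>" for z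
    unfolding c_def using that by (intro Min_le) auto
  define B where "B = (\<Sum>y\<in>UNIV. \<bar>u y\<bar> + \<bar>g y\<bar>)"
  have uy_gy_le: "\<bar>u y\<bar> + \<bar>g y\<bar> \<le> B" for y
    unfolding B_def by (rule member_le_sum) auto
  have u_bnd: "\<bar>u y\<bar> \<le> B" and g_bnd: "\<bar>g y\<bar> \<le> B" and "0 \<le> B" for y
    using uy_gy_le[of y] by linarith+
  let ?E = "\<integral>\<omega>. g (proc x \<omega> (hit_time \<Gamma> x \<omega>)) \<partial>random_maps st"
  have "u x \<le> ?E + 2 * B * (1 - c) ^ n" for n
  proof -
    have "u x \<le> (\<integral>\<omega>. u (stopped_proc \<Gamma> x \<omega> n) \<partial>random_maps st)"
      using sub by (rule subharmonic_le_integral_stopped_proc)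
    also have "\<dots> \<le> ?E + 2 * B * (\<integral>\<omega>. indicat_real (-\<Gamma>) (stopped_proc \<Gamma> x \<omega> n) \<partial>random_maps st)"
      using bdry u_bnd g_bnd by (rule integral_stopped_proc_le_integral_hit)
    also have "\<dots> \<le> ?E + 2 * B * (1 - c) ^ n"
      using integral_not_yet_stopped_le[OF c_le \<open>c \<le> 1\<close>] \<open>0 \<le> B\<close> by (simp add: mult_left_mono)
    finally show ?thesis .
  qed
  moreover have "(\<lambda>n. ?E + 2 * B * (1 - c) ^ n) \<longlonglongrightarrow> ?E + 2 * B * 0"
    using \<open>0 < c\<close> \<open>c \<le> 1\<close> by (intro tendsto_intros LIMSEQ_power_zero) auto
  ultimately show ?thesis
    using LIMSEQ_le_const by fastforce
qed

subsection \<open>The tug-of-war step with noise\<close>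

lemma deg_pos: "weighted_graph w \<Longrightarrow> y \<in> nbrs w z \<Longrightarrow> 0 < deg w z"
  unfolding deg_def by (intro sum_pos2[where i=y]) (auto simp: weighted_graph_def nbrs_def)

lemma pmf_walk_pmf:
  assumes "weighted_graph w" "0 < deg w z"
  shows "pmf (walk_pmf w z) y = w z y / deg w z"
  unfolding walk_pmf_def
proof (rule pmf_embed_pmf)
  show "0 \<le> w z x / deg w z" for x
    using assms by (auto simp: weighted_graph_def)
  have "(\<Sum>x\<in>UNIV. w z x / deg w z) = 1"
    using assms by (simp add: sum_divide_distrib[symmetric] deg_def)
  then show "(\<integral>\<^sup>+ x. ennreal (w z x / deg w z) \<partial>count_space UNIV) = 1"
    using assms by (subst nn_integral_count_space_finite) (auto simp: weighted_graph_def)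
qed

lemma integral_walk_pmf:
  assumes "weighted_graph w" "0 < deg w z"
  shows "(\<integral>y. f y \<partial>walk_pmf w z) = (\<Sum>y\<in>UNIV. w z y * f y) / deg w z"
  by (subst integral_measure_pmf[of UNIV]) (auto simp: pmf_walk_pmf[OF assms] sum_divide_distrib)

lemma integral_step_pmf:
  assumes "weighted_graph w" "0 < deg w z" "z \<notin> \<Gamma>" "p \<ge> 2"
  shows "(\<integral>y. f y \<partial>step_pmf p w \<Gamma> smax smin z) =
     1 / (p - 1) * ((\<Sum>y\<in>UNIV. w z y * f y) / deg w z) + (1 - 1 / (p - 1)) * (f (smax z) / 2 + f (smin z) / 2)"
  using assms unfolding step_pmf_def
  by (simp add: integral_bind_pmf_finite integral_walk_pmf)

lemma Lp_eq_minus_mean: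
  assumes "deg w x \<noteq> 0"
  shows "Lp p w u x = u x -
    (1 / (p - 1) * ((\<Sum>y\<in>UNIV. w x y * u y) / deg w x)
     + (1 - 1 / (p - 1)) * ((Max (u ` nbrs w x) + Min (u ` nbrs w x)) / 2))"
proof -
  have "(\<Sum>y\<in>UNIV. w x y * (u x - u y)) = deg w x * u x - (\<Sum>y\<in>UNIV. w x y * u y)"
    by (simp add: deg_def right_diff_distrib sum_subtractf sum_distrib_right)
  with assms have mean: "1 / deg w x * (\<Sum>y\<in>UNIV. w x y * (u x - u y))
      = u x - (\<Sum>y\<in>UNIV. w x y * u y) / deg w x"
    by (simp add: field_simps)
  show ?thesis
    unfolding Lp_def mean by (simp add: right_diff_distrib left_diff_distrib)
qed

lemma solution_le_integral_step_pmf: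
  assumes wg: "weighted_graph w" and "p \<ge> 2" and "z \<notin> \<Gamma>" and Lp_0: "Lp p w u z = 0"
    and smax: "smax z \<in> nbrs w z" "\<forall>y\<in>nbrs w z. u y \<le> u (smax z)"
    and smin: "smin z \<in> nbrs w z"
  shows "u z \<le> (\<integral>y. u y \<partial>step_pmf p w \<Gamma> smax smin z)"
proof -
  have deg: "0 < deg w z" using wg smax(1) by (rule deg_pos)
  have "0 \<le> 1 - 1 / (p - 1)" using \<open>p \<ge> 2\<close> by (simp add: field_simps)
  have "Max (u ` nbrs w z) = u (smax z)" by (rule Max_eqI) (use smax in auto)
  moreover have "Min (u ` nbrs w z) \<le> u (smin z)" using smin by (intro Min_le) auto
  ultimately have "(1 - 1 / (p - 1)) * ((Max (u ` nbrs w z) + Min (u ` nbrs w z)) / 2)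
      \<le> (1 - 1 / (p - 1)) * (u (smax z) / 2 + u (smin z) / 2)"
    using \<open>0 \<le> 1 - 1 / (p - 1)\<close> by (intro mult_left_mono) auto
  then show ?thesis
    using Lp_0 Lp_eq_minus_mean[of w z p u] deg integral_step_pmf[OF wg deg \<open>z \<notin> \<Gamma>\<close> \<open>p \<ge> 2\<close>]
    by simp
qed

lemma step_pmf_hits_nbr:
  assumes wg: "weighted_graph w" and "p \<ge> 2" and "z \<notin> \<Gamma>" and y: "y \<in> nbrs w z \<inter> \<Gamma>"
  shows "0 < measure_pmf.prob (step_pmf p w \<Gamma> smax smin z) \<Gamma>"
proof -
  have deg: "0 < deg w z" using wg y by (auto intro: deg_pos)
  have "True \<in> set_pmf (bernoulli_pmf (1 / (p - 1)))"
    using \<open>p \<ge> 2\<close> by (simp add: set_pmf_iff)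
  moreover have "y \<in> set_pmf (walk_pmf w z)"
    using y deg by (simp add: set_pmf_iff pmf_walk_pmf[OF wg deg] nbrs_def)
  ultimately have "y \<in> set_pmf (step_pmf p w \<Gamma> smax smin z)"
    unfolding step_pmf_def using \<open>z \<notin> \<Gamma>\<close> by auto
  then show ?thesis using y by (intro measure_pmf_posI) auto
qed

theorem mainTheorem3:
  fixes w :: "'a::finite \<Rightarrow> 'a \<Rightarrow> real"
    and p :: real and \<Gamma> :: "'a set" and g u :: "'a \<Rightarrow> real"
    and smax smin :: "'a \<Rightarrow> 'a" and x :: 'a
  assumes "weighted_graph w" and "connected_graph w"
    and "p \<ge> 2"
    and "A1 w \<Gamma>"
    and "solves_P p w \<Gamma> g u"
    and "\<And>z. z \<notin> \<Gamma> \<Longrightarrow> smax z \<in> nbrs w z \<and> (\<forall>y\<in>nbrs w z. u y \<le> u (smax z))"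
    and "\<And>z. z \<notin> \<Gamma> \<Longrightarrow> smin z \<in> nbrs w z \<inter> \<Gamma> \<and> (\<forall>y\<in>nbrs w z \<inter> \<Gamma>. g (smin z) \<le> g y)"
  shows "u x - g x \<le>
    (\<integral>\<omega>. g (proc x \<omega> (hit_time \<Gamma> x \<omega>)) - g x \<partial>innov_space p w \<Gamma> smax smin)"
proof -
  note wg = assms(1) and p = assms(3) and sol = assms(5)[unfolded solves_P_def]
  let ?st = "step_pmf p w \<Gamma> smax smin"
  interpret prob_space "random_maps ?st"
    by (rule prob_space_random_maps)
  have "u x \<le> (\<integral>\<omega>. g (proc x \<omega> (hit_time \<Gamma> x \<omega>)) \<partial>random_maps ?st)"
  proof (rule subharmonic_le_integral_hit)
    show "u z \<le> (\<integral>y. u y \<partial>?st z)" if "z \<notin> \<Gamma>" for z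
      using assms(6,7)[OF that] sol that by (intro solution_le_integral_step_pmf[OF wg p]) auto
    show "0 < measure_pmf.prob (?st z) \<Gamma>" if "z \<notin> \<Gamma>" for z
      using assms(4) that unfolding A1_def by (blast intro: step_pmf_hits_nbr[OF wg p])
    show "u z = g z" if "z \<in> \<Gamma>" for z
      using sol that by blast
  qed
  moreover have "integrable (random_maps ?st) (\<lambda>\<omega>. g (proc x \<omega> (hit_time \<Gamma> x \<omega>)))"
    by (rule integrable_finite_valued[OF measurable_proc_hit_time])
  ultimately show ?thesis
    by (simp add: innov_space_def random_maps_def[symmetric] prob_space)
qed

end
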